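(* Let $C>0$ be a constant such that $\|x\|\le C\|x\|_*$ for all $x\in\mathbb{X}$. Let $f$ satisfy Assumptions (A) and (B), and let $\mathcal{D}$ and $\delta>0$ satisfy Assumption (E) below. Let $\nu>0$, $u\sim\mathcal{D}$, and define \[ \nabla f_\nu(x)=\mathbb{E}_u\Big[\frac{\delta}{\nu}\big(f(x+\nu u)-f(x)\big)u\Big],\qquad \nabla f_\nu(x;\xi)=\frac{\delta}{\nu}\big(f(x+\nu u;\xi)-f(x;\xi)\big)u . \] Then for all $x\in\mathbb{X}$ (and every realisation $\xi$): (a) $\|\nabla f_\nu(x)-\nabla f(x)\|_*\le \frac{\delta\nu C^2L}{2}\mathbb{E}_u[\|u\|_*^3]$; (b) $\mathbb{E}_u[\|\nabla f_\nu(x;\xi)\|_*^2]\le \frac{C^4L^2\delta^2\nu^2}{2}\mathbb{E}_u[\|u\|_*^6]+2\delta^2\mathbb{E}_u[\langle\nabla f(x;\xi),u\rangle^2\|u\|_*^2]$.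
   Context: $\mathbb{X}$ is a finite-dimensional real vector space with inner product $\langle\cdot,\cdot\rangle$ and a norm $\|\cdot\|$, with dual norm $\|g\|_*=\sup_{\|x\|\le1}\langle g,x\rangle$. $f(x)=\mathbb{E}_\xi[f(x;\xi)]$ for functions $f(\cdot;\xi):\mathbb{X}\to\mathbb{R}$. Assumption (A): for every $\xi$, $f(\cdot;\xi)$ is differentiable, $G$-Lipschitz and $\|\nabla f(x;\xi)-\nabla f(y;\xi)\|_*\le L\|x-y\|$ for all $x,y\in\mathbb{X}$. Assumption (B): $\mathbb{E}_\xi[\nabla f(x;\xi)]=\nabla f(x)$ for all $x$. Assumption (E): $\mathcal{D}$ is a probability distribution supported in $\mathbb{X}$ and there is $\delta>0$ such that, for $u\sim\mathcal{D}$, $\mathbb{E}_u[\langle g,u\rangle u]=g/\delta$ for all $g\in\mathbb{X}$. *)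

theory Defs
  imports "HOL-Probability.Probability"
begin

definition is_norm :: "('a::real_vector \<Rightarrow> real) \<Rightarrow> bool" where
  "is_norm nrm \<longleftrightarrow> (\<forall>x. nrm x = 0 \<longleftrightarrow> x = 0) \<and>
                    (\<forall>a x. nrm (a *\<^sub>R x) = \<bar>a\<bar> * nrm x) \<and>
                    (\<forall>x y. nrm (x + y) \<le> nrm x + nrm y)"

definition dual_norm :: "('a::real_inner \<Rightarrow> real) \<Rightarrow> 'a \<Rightarrow> real" where
  "dual_norm nrm g = Sup {g \<bullet> x | x. nrm x \<le> 1}"

definition zo_grad :: "('a::real_vector \<Rightarrow> 'b \<Rightarrow> real) \<Rightarrow> real \<Rightarrow> real \<Rightarrow> 'a \<Rightarrow> 'b \<Rightarrow> 'a \<Rightarrow> 'a" where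
  "zo_grad F \<delta> \<nu> x \<xi> u = ((\<delta> / \<nu>) * (F (x + \<nu> *\<^sub>R u) \<xi> - F x \<xi>)) *\<^sub>R u"

end

theory Submission
  imports Defs
begin

(* Smoothness of each F(.;xi) yields, by the mean value inequality along a segment, the
   descent bound |F(x+h;xi) - F(x;xi) - <grad F(x;xi), h>| <= L nrm(h)^2 / 2, and averaging
   over xi gives the same bound for f. By (E), E_u[delta <g,u> u] = g, so the bias of the
   smoothed gradient is E_u[(delta/nu) R(u) u], where R(u) is the remainder at h = nu u;
   since nrm(u) <= C ||u||_*, its integrand has dual norm at most
   (delta nu C^2 L / 2) ||u||_*^3, and the dual norm of an integral is at most the integral
   of the dual norm. For (b), the estimator is (delta/nu) (R(u) + nu <grad F(x;xi), u>) u,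
   and (a + b)^2 <= 2 a^2 + 2 b^2.
   The integrand of the smoothed gradient is integrable because f is Lipschitz and (E)
   forces a finite second moment of u; the dual norm is measurable because it is Lipschitz,
   all norms on a finite-dimensional space being equivalent. *)

lemma is_norm_zero: "is_norm nrm \<Longrightarrow> nrm 0 = 0"
  unfolding is_norm_def by blast

lemma is_norm_eq_0_iff: "is_norm nrm \<Longrightarrow> nrm x = 0 \<longleftrightarrow> x = 0"
  unfolding is_norm_def by blast

lemma is_norm_scaleR: "is_norm nrm \<Longrightarrow> nrm (a *\<^sub>R x) = \<bar>a\<bar> * nrm x"
  unfolding is_norm_def by blast

lemma is_norm_triangle: "is_norm nrm \<Longrightarrow> nrm (x + y) \<le> nrm x + nrm y"
  unfolding is_norm_def by blast

lemma is_norm_minus: "is_norm nrm \<Longrightarrow> nrm (- x) = nrm x"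
  using is_norm_scaleR[of nrm "-1" x] by simp

lemma is_norm_minus_commute: "is_norm nrm \<Longrightarrow> nrm (x - y) = nrm (y - x)"
  using is_norm_minus[of nrm "x - y"] by simp

lemma is_norm_nonneg:
  assumes n: "is_norm nrm"
  shows "nrm x \<ge> 0"
proof -
  have "0 = nrm (x - x)" using is_norm_zero[OF n] by simp
  also have "\<dots> \<le> nrm x + nrm (- x)" using is_norm_triangle[OF n, of x "- x"] by simp
  also have "\<dots> = 2 * nrm x" using is_norm_minus[OF n, of x] by simp
  finally show ?thesis by simp
qed

lemma is_norm_pos: "is_norm nrm \<Longrightarrow> x \<noteq> 0 \<Longrightarrow> nrm x > 0"
  using is_norm_nonneg is_norm_eq_0_iff by (metis order_le_less)

lemma is_norm_abs_diff_le:
  assumes n: "is_norm nrm"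
  shows "\<bar>nrm x - nrm y\<bar> \<le> nrm (x - y)"
  using is_norm_triangle[OF n, of y "x - y"] is_norm_triangle[OF n, of x "y - x"]
    is_norm_minus_commute[OF n, of x y] by simp

lemma is_norm_sum_le: "is_norm nrm \<Longrightarrow> nrm (sum g S) \<le> (\<Sum>i\<in>S. nrm (g i))"
  by (induction S rule: infinite_finite_induct)
    (auto simp: is_norm_zero intro: order.trans[OF is_norm_triangle])

lemma is_norm_le_norm:
  fixes nrm :: "'a::euclidean_space \<Rightarrow> real"
  assumes n: "is_norm nrm"
  shows "nrm x \<le> (\<Sum>b\<in>Basis. nrm b) * norm x"
proof -
  have "nrm x = nrm (\<Sum>b\<in>Basis. (x \<bullet> b) *\<^sub>R b)" by (simp add: euclidean_representation)
  also have "\<dots> \<le> (\<Sum>b\<in>Basis. nrm ((x \<bullet> b) *\<^sub>R b))" by (rule is_norm_sum_le[OF n])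
  also have "\<dots> = (\<Sum>b\<in>Basis. \<bar>x \<bullet> b\<bar> * nrm b)" by (simp add: is_norm_scaleR[OF n])
  also have "\<dots> \<le> (\<Sum>b\<in>Basis. norm x * nrm b)"
    by (intro sum_mono mult_right_mono) (auto simp: Basis_le_norm is_norm_nonneg[OF n])
  finally show ?thesis by (simp add: sum_distrib_left mult.commute)
qed

lemma is_norm_lipschitz_on:
  fixes nrm :: "'a::euclidean_space \<Rightarrow> real"
  assumes n: "is_norm nrm"
  shows "(\<Sum>b\<in>Basis. nrm b)-lipschitz_on S nrm"
proof (rule lipschitz_onI)
  show "0 \<le> (\<Sum>b\<in>Basis. nrm b)" by (simp add: sum_nonneg is_norm_nonneg[OF n])
  fix x y
  show "dist (nrm x) (nrm y) \<le> (\<Sum>b\<in>Basis. nrm b) * dist x y"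
    using is_norm_abs_diff_le[OF n, of x y] is_norm_le_norm[OF n, of "x - y"]
    by (simp add: dist_real_def dist_norm)
qed

text \<open>The minimum of nrm on the compact Euclidean unit sphere is positive.\<close>
lemma is_norm_ge_norm:
  fixes nrm :: "'a::euclidean_space \<Rightarrow> real"
  assumes n: "is_norm nrm"
  obtains c where "c > 0" "\<And>x. c * norm x \<le> nrm x"
proof -
  have "sphere (0::'a) 1 \<noteq> {}" by simp
  then obtain x0 :: 'a where x0: "x0 \<in> sphere 0 1" "\<And>y. y \<in> sphere 0 1 \<Longrightarrow> nrm x0 \<le> nrm y"
    using continuous_attains_inf[OF compact_sphere _
        lipschitz_on_continuous_on[OF is_norm_lipschitz_on[OF n]]] by blast
  have "nrm x0 * norm x \<le> nrm x" for x
  proof (cases "x = 0")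
    case False
    then have "nrm x0 \<le> nrm ((1 / norm x) *\<^sub>R x)" by (intro x0(2)) (simp add: norm_divide)
    then show ?thesis using False by (simp add: is_norm_scaleR[OF n] field_simps)
  qed (simp add: is_norm_zero[OF n])
  moreover have "nrm x0 > 0" using x0(1) by (intro is_norm_pos[OF n]) auto
  ultimately show ?thesis using that by blast
qed

lemma inner_bounded_on_is_norm_unit_ball:
  fixes nrm :: "'a::euclidean_space \<Rightarrow> real"
  assumes n: "is_norm nrm"
  obtains K where "K \<ge> 0" "\<And>g x. nrm x \<le> 1 \<Longrightarrow> g \<bullet> x \<le> K * norm g"
proof -
  obtain c where c: "c > 0" "\<And>x. c * norm x \<le> nrm x" using is_norm_ge_norm[OF n] by blast
  have "g \<bullet> x \<le> (1 / c) * norm g" if "nrm x \<le> 1" for g x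
  proof -
    have "g \<bullet> x \<le> norm g * norm x" by (rule norm_cauchy_schwarz)
    also have "\<dots> \<le> norm g * (1 / c)"
    proof (rule mult_left_mono)
      show "norm x \<le> 1 / c" using c(1) c(2)[of x] that by (simp add: field_simps)
    qed simp
    finally show ?thesis by simp
  qed
  then show ?thesis using c(1) by (intro that[of "1 / c"]) simp_all
qed

lemma inner_le_dual_norm:
  fixes nrm :: "'a::euclidean_space \<Rightarrow> real"
  assumes n: "is_norm nrm" and x: "nrm x \<le> 1"
  shows "g \<bullet> x \<le> dual_norm nrm g"
proof -
  obtain K where "K \<ge> 0" "\<And>g y. nrm y \<le> 1 \<Longrightarrow> g \<bullet> y \<le> K * norm g"
    using inner_bounded_on_is_norm_unit_ball[OF n] by blast
  then have "bdd_above {g \<bullet> x | x. nrm x \<le> 1}" by (auto intro!: bdd_aboveI[of _ "K * norm g"])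
  then show ?thesis unfolding dual_norm_def using x by (auto intro!: cSup_upper)
qed

lemma dual_norm_le:
  assumes n: "is_norm nrm" and B: "\<And>x. nrm x \<le> 1 \<Longrightarrow> g \<bullet> x \<le> B"
  shows "dual_norm nrm g \<le> B"
proof -
  have "g \<bullet> 0 \<in> {g \<bullet> x |x. nrm x \<le> 1}" using is_norm_zero[OF n] by fastforce
  then show ?thesis unfolding dual_norm_def using B by (auto intro!: cSup_least)
qed

lemma dual_norm_nonneg:
  fixes nrm :: "'a::euclidean_space \<Rightarrow> real"
  shows "is_norm nrm \<Longrightarrow> dual_norm nrm g \<ge> 0"
  using inner_le_dual_norm[of nrm 0 g] by (simp add: is_norm_zero)

lemma abs_inner_le_dual_norm_mult:
  fixes nrm :: "'a::euclidean_space \<Rightarrow> real"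
  assumes n: "is_norm nrm"
  shows "\<bar>g \<bullet> x\<bar> \<le> dual_norm nrm g * nrm x"
proof (cases "x = 0")
  case False
  then have p: "nrm x > 0" by (rule is_norm_pos[OF n])
  define y where "y = (1 / nrm x) *\<^sub>R x"
  have "nrm y \<le> 1" "nrm (- y) \<le> 1"
    using p by (simp_all add: y_def is_norm_scaleR[OF n] is_norm_minus[OF n])
  then have "\<bar>g \<bullet> y\<bar> \<le> dual_norm nrm g"
    using inner_le_dual_norm[OF n] by (metis abs_le_iff inner_minus_right)
  then show ?thesis using p by (simp add: y_def field_simps)
qed (simp add: is_norm_zero[OF n])

lemma dual_norm_triangle:
  fixes nrm :: "'a::euclidean_space \<Rightarrow> real"
  assumes n: "is_norm nrm"
  shows "dual_norm nrm (g + h) \<le> dual_norm nrm g + dual_norm nrm h"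
  by (rule dual_norm_le[OF n]) (simp add: inner_add_left add_mono inner_le_dual_norm[OF n])

lemma dual_norm_scaleR_le:
  fixes nrm :: "'a::euclidean_space \<Rightarrow> real"
  assumes n: "is_norm nrm"
  shows "dual_norm nrm (a *\<^sub>R g) \<le> \<bar>a\<bar> * dual_norm nrm g"
proof (rule dual_norm_le[OF n])
  fix x assume x: "nrm x \<le> 1"
  have "(a *\<^sub>R g) \<bullet> x \<le> \<bar>a\<bar> * \<bar>g \<bullet> x\<bar>" by (simp add: abs_mult[symmetric])
  also have "\<dots> \<le> \<bar>a\<bar> * (dual_norm nrm g * nrm x)"
    by (intro mult_left_mono abs_inner_le_dual_norm_mult[OF n]) simp
  also have "\<dots> \<le> \<bar>a\<bar> * dual_norm nrm g"
    using x dual_norm_nonneg[OF n, of g] is_norm_nonneg[OF n, of x]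
    by (intro mult_left_mono) (auto intro: mult_left_le)
  finally show "(a *\<^sub>R g) \<bullet> x \<le> \<bar>a\<bar> * dual_norm nrm g" .
qed

lemma dual_norm_lipschitz_on:
  fixes nrm :: "'a::euclidean_space \<Rightarrow> real"
  assumes n: "is_norm nrm"
  obtains K where "K-lipschitz_on S (dual_norm nrm)"
proof -
  obtain K where K: "K \<ge> 0" "\<And>g x. nrm x \<le> 1 \<Longrightarrow> g \<bullet> x \<le> K * norm g"
    using inner_bounded_on_is_norm_unit_ball[OF n] by blast
  have bound: "dual_norm nrm g \<le> K * norm g" for g
    using K(2) by (rule dual_norm_le[OF n])
  have "K-lipschitz_on S (dual_norm nrm)"
  proof (rule lipschitz_onI[OF _ K(1)])
    fix g h
    have "dual_norm nrm g \<le> dual_norm nrm h + K * norm (g - h)"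
      using dual_norm_triangle[OF n, of h "g - h"] bound[of "g - h"] by simp
    moreover have "dual_norm nrm h \<le> dual_norm nrm g + K * norm (g - h)"
      using dual_norm_triangle[OF n, of g "h - g"] bound[of "h - g"] by (simp add: norm_minus_commute)
    ultimately show "dist (dual_norm nrm g) (dual_norm nrm h) \<le> K * dist g h"
      by (simp add: dist_real_def dist_norm abs_le_iff)
  qed
  then show ?thesis by (rule that)
qed

lemma borel_measurable_dual_norm:
  fixes nrm :: "'a::euclidean_space \<Rightarrow> real"
  assumes n: "is_norm nrm" and M: "sets M = sets borel"
  shows "dual_norm nrm \<in> borel_measurable M"
proof -
  obtain K where "K-lipschitz_on UNIV (dual_norm nrm)" by (rule dual_norm_lipschitz_on[OF n])
  then have "dual_norm nrm \<in> borel_measurable borel"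
    by (intro borel_measurable_continuous_onI lipschitz_on_continuous_on)
  then show ?thesis by (simp add: measurable_cong_sets[OF M refl])
qed

lemma dual_norm_integral_le:
  fixes nrm :: "'a::euclidean_space \<Rightarrow> real" and v :: "'b \<Rightarrow> 'a"
  assumes n: "is_norm nrm" and v: "integrable M v"
  shows "ennreal (dual_norm nrm (\<integral>x. v x \<partial>M)) \<le> (\<integral>\<^sup>+x. ennreal (dual_norm nrm (v x)) \<partial>M)"
proof (cases "integrable M (\<lambda>x. dual_norm nrm (v x))")
  case True
  have "dual_norm nrm (\<integral>x. v x \<partial>M) \<le> (\<integral>x. dual_norm nrm (v x) \<partial>M)"
  proof (rule dual_norm_le[OF n])
    fix y assume y: "nrm y \<le> 1"
    have "(\<integral>x. v x \<partial>M) \<bullet> y = (\<integral>x. v x \<bullet> y \<partial>M)" using v by simp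
    also have "\<dots> \<le> (\<integral>x. dual_norm nrm (v x) \<partial>M)"
      using v True inner_le_dual_norm[OF n y] by (intro integral_mono) auto
    finally show "(\<integral>x. v x \<partial>M) \<bullet> y \<le> (\<integral>x. dual_norm nrm (v x) \<partial>M)" .
  qed
  also have "ennreal \<dots> = (\<integral>\<^sup>+x. ennreal (dual_norm nrm (v x)) \<partial>M)"
    using True by (intro nn_integral_eq_integral[symmetric]) (auto simp: dual_norm_nonneg[OF n])
  finally show ?thesis by (simp add: ennreal_leI)
next
  case False
  have "(\<lambda>x. dual_norm nrm (v x)) \<in> borel_measurable M"
    using borel_measurable_integrable[OF v] borel_measurable_dual_norm[OF n refl] by measurable
  then have "\<not> (\<integral>\<^sup>+x. ennreal (norm (dual_norm nrm (v x))) \<partial>M) < \<infinity>"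
    using False integrableI_bounded[of "\<lambda>x. dual_norm nrm (v x)" M] by blast
  then show ?thesis by (simp add: dual_norm_nonneg[OF n] not_less top_unique)
qed

lemma has_real_derivative_along_line:
  fixes \<phi> :: "'a::real_inner \<Rightarrow> real"
  assumes diff: "\<And>y. (\<phi> has_derivative (\<lambda>h. g y \<bullet> h)) (at y)"
  shows "((\<lambda>t. \<phi> (x + t *\<^sub>R h)) has_real_derivative g (x + t *\<^sub>R h) \<bullet> h) (at t)"
proof -
  have "((\<lambda>t. x + t *\<^sub>R h) has_derivative (\<lambda>s. s *\<^sub>R h)) (at t)"
    by (auto intro!: derivative_eq_intros)
  from has_derivative_compose[OF this diff]
  have "((\<lambda>t. \<phi> (x + t *\<^sub>R h)) has_derivative (\<lambda>s. s * (g (x + t *\<^sub>R h) \<bullet> h))) (at t)"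
    by simp
  moreover have "(\<lambda>s. s * (g (x + t *\<^sub>R h) \<bullet> h)) = (*) (g (x + t *\<^sub>R h) \<bullet> h)"
    by (simp add: fun_eq_iff mult.commute)
  ultimately show ?thesis by (simp add: has_field_derivative_def)
qed

text \<open>The descent lemma: apply the mean value inequality to
  t \<mapsto> \<phi>(x + t h) - t \<langle>g x, h\<rangle>, whose derivative is bounded by L t nrm(h)^2.\<close>
lemma abs_first_order_remainder_le:
  fixes nrm :: "'a::euclidean_space \<Rightarrow> real" and \<phi> :: "'a \<Rightarrow> real"
  assumes n: "is_norm nrm"
    and diff: "\<And>y. (\<phi> has_derivative (\<lambda>h. g y \<bullet> h)) (at y)"
    and lip: "\<And>y z. dual_norm nrm (g y - g z) \<le> L * nrm (y - z)"
  shows "\<bar>\<phi> (x + h) - \<phi> x - g x \<bullet> h\<bar> \<le> L * nrm h ^ 2 / 2"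
proof -
  define c where "c = L * nrm h ^ 2"
  define \<psi> where "\<psi> t = \<phi> (x + t *\<^sub>R h) - t * (g x \<bullet> h)" for t
  have \<psi>': "(\<psi> has_real_derivative (g (x + t *\<^sub>R h) - g x) \<bullet> h) (at t)" for t
    unfolding \<psi>_def using has_real_derivative_along_line[OF diff, of x h t]
    by (auto intro!: derivative_eq_intros simp: inner_diff_left)
  have bound: "\<bar>(g (x + t *\<^sub>R h) - g x) \<bullet> h\<bar> \<le> c * t" if "0 \<le> t" for t
  proof -
    have "\<bar>(g (x + t *\<^sub>R h) - g x) \<bullet> h\<bar> \<le> dual_norm nrm (g (x + t *\<^sub>R h) - g x) * nrm h"
      by (rule abs_inner_le_dual_norm_mult[OF n])
    also have "\<dots> \<le> L * nrm (t *\<^sub>R h) * nrm h"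
      using lip[of "x + t *\<^sub>R h" x] by (intro mult_right_mono) (simp_all add: is_norm_nonneg[OF n])
    also have "\<dots> = c * t" using that by (simp add: c_def is_norm_scaleR[OF n] power2_eq_square)
    finally show ?thesis .
  qed
  have "norm (\<psi> 1 - \<psi> 0) \<le> c * 1\<^sup>2 / 2 - c * 0\<^sup>2 / 2"
  proof (rule differentiable_bound_general[OF zero_less_one])
    show "continuous_on {0..1} \<psi>"
      using \<psi>' by (intro DERIV_continuous_on) (auto intro: has_field_derivative_at_within)
    show "(\<psi> has_vector_derivative (g (x + t *\<^sub>R h) - g x) \<bullet> h) (at t)" for t
      using \<psi>' by (simp add: has_real_derivative_iff_has_vector_derivative)
    show "((\<lambda>t. c * t\<^sup>2 / 2) has_vector_derivative c * t) (at t)" for t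
      by (auto intro!: derivative_eq_intros simp flip: has_real_derivative_iff_has_vector_derivative)
    show "norm ((g (x + t *\<^sub>R h) - g x) \<bullet> h) \<le> c * t" if "0 < t" for t
      using bound that by simp
  qed (auto intro!: continuous_intros)
  then show ?thesis unfolding \<psi>_def c_def by (simp add: algebra_simps)
qed

lemma (in prob_space) abs_integral_le_const:
  fixes r :: "'a \<Rightarrow> real"
  assumes r: "integrable M r" and b: "\<And>x. x \<in> space M \<Longrightarrow> \<bar>r x\<bar> \<le> c"
  shows "\<bar>\<integral>x. r x \<partial>M\<bar> \<le> c"
proof -
  have "\<bar>\<integral>x. r x \<partial>M\<bar> \<le> (\<integral>x. \<bar>r x\<bar> \<partial>M)" by (rule integral_abs_bound)
  also have "\<dots> \<le> c" using r b by (intro integral_le_const) auto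
  finally show ?thesis .
qed

lemma abs_remainder_scaleR_le_dual_norm:
  fixes nrm :: "'a::euclidean_space \<Rightarrow> real" and \<phi> :: "'a \<Rightarrow> real"
  assumes n: "is_norm nrm" and C: "\<And>x. nrm x \<le> C * dual_norm nrm x"
    and rem: "\<And>h. \<bar>\<phi> (x + h) - \<phi> x - g \<bullet> h\<bar> \<le> L * nrm h ^ 2 / 2"
  shows "\<bar>\<phi> (x + \<nu> *\<^sub>R u) - \<phi> x - \<nu> * (g \<bullet> u)\<bar> \<le> L * C^2 * \<nu>^2 * dual_norm nrm u ^ 2 / 2"
proof -
  obtain b :: 'a where "b \<in> Basis" using nonempty_Basis by blast
  then have "0 < nrm b" by (intro is_norm_pos[OF n]) auto
  moreover have "0 \<le> L * nrm b ^ 2 / 2" using rem[of b] by (rule order_trans[OF abs_ge_zero])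
  ultimately have L: "L \<ge> 0" by (simp add: zero_le_mult_iff)
  have "nrm u ^ 2 \<le> (C * dual_norm nrm u) ^ 2"
    using C[of u] is_norm_nonneg[OF n, of u] by (rule power_mono)
  have "\<bar>\<phi> (x + \<nu> *\<^sub>R u) - \<phi> x - \<nu> * (g \<bullet> u)\<bar> \<le> L * nrm (\<nu> *\<^sub>R u) ^ 2 / 2"
    using rem[of "\<nu> *\<^sub>R u"] by simp
  also have "\<dots> = L * \<nu>^2 * nrm u ^ 2 / 2"
    by (simp add: is_norm_scaleR[OF n] power_mult_distrib)
  also have "\<dots> \<le> L * \<nu>^2 * (C * dual_norm nrm u) ^ 2 / 2"
    using L \<open>nrm u ^ 2 \<le> (C * dual_norm nrm u) ^ 2\<close> by (intro divide_right_mono mult_left_mono) simp_all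
  finally show ?thesis by (simp add: power_mult_distrib mult_ac)
qed

lemma integrable_norm_power2:
  fixes D :: "'a::euclidean_space measure"
  assumes "\<And>g. integrable D (\<lambda>u. (g \<bullet> u) *\<^sub>R u)"
  shows "integrable D (\<lambda>u. norm u ^ 2)"
proof -
  have "integrable D (\<lambda>u. \<Sum>b\<in>Basis. ((b \<bullet> u) *\<^sub>R u) \<bullet> b)"
    using assms by (intro Bochner_Integration.integrable_sum integrable_inner_left)
  moreover have "(\<Sum>b\<in>Basis. ((b \<bullet> u) *\<^sub>R u) \<bullet> b) = norm u ^ 2" for u :: 'a
    by (simp add: euclidean_inner[of u u] power2_norm_eq_inner inner_commute mult.commute)
  ultimately show ?thesis by simp
qed

lemma integrable_difference_quotient_scaleR:
  fixes nrm :: "'a::euclidean_space \<Rightarrow> real" and f :: "'a \<Rightarrow> real"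
  assumes n: "is_norm nrm" and D: "sets D = sets borel"
    and E: "\<And>g. integrable D (\<lambda>u. (g \<bullet> u) *\<^sub>R u)"
    and lip: "\<And>y z. \<bar>f y - f z\<bar> \<le> G * nrm (y - z)"
  shows "integrable D (\<lambda>u. (a * (f (x + \<nu> *\<^sub>R u) - f x)) *\<^sub>R u)"
proof -
  define M where "M = \<bar>G\<bar> * (\<Sum>b\<in>Basis. nrm (b::'a))"
  have lipM: "\<bar>f y - f z\<bar> \<le> M * norm (y - z)" for y z
  proof -
    have "\<bar>f y - f z\<bar> \<le> \<bar>G\<bar> * nrm (y - z)"
      using lip[of y z] mult_right_mono[OF abs_ge_self is_norm_nonneg[OF n]] by (rule order_trans)
    also have "\<dots> \<le> M * norm (y - z)"
      unfolding M_def using is_norm_le_norm[OF n, of "y - z"] by (simp add: mult.assoc mult_left_mono)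
    finally show ?thesis .
  qed
  have "M \<ge> 0" unfolding M_def by (simp add: sum_nonneg is_norm_nonneg[OF n])
  with lipM have "M-lipschitz_on UNIV f"
    by (intro lipschitz_onI) (simp_all add: dist_real_def dist_norm)
  then have "continuous_on UNIV f" by (rule lipschitz_on_continuous_on)
  then have "continuous_on UNIV (\<lambda>u. f (x + \<nu> *\<^sub>R u))"
    by (rule continuous_on_compose2) (auto intro!: continuous_intros)
  then have "(\<lambda>u. (a * (f (x + \<nu> *\<^sub>R u) - f x)) *\<^sub>R u) \<in> borel_measurable borel"
    by (intro borel_measurable_continuous_onI continuous_intros)
  then have meas: "(\<lambda>u. (a * (f (x + \<nu> *\<^sub>R u) - f x)) *\<^sub>R u) \<in> borel_measurable D"
    using measurable_cong_sets[OF D refl] by blast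
  show ?thesis
  proof (rule Bochner_Integration.integrable_bound[OF _ meas])
    show "integrable D (\<lambda>u. \<bar>a\<bar> * M * \<bar>\<nu>\<bar> * norm u ^ 2)"
      using integrable_norm_power2[OF E] by simp
    show "AE u in D. norm ((a * (f (x + \<nu> *\<^sub>R u) - f x)) *\<^sub>R u) \<le> norm (\<bar>a\<bar> * M * \<bar>\<nu>\<bar> * norm u ^ 2)"
    proof (rule AE_I2)
      fix u
      have "norm ((a * (f (x + \<nu> *\<^sub>R u) - f x)) *\<^sub>R u) = \<bar>a\<bar> * \<bar>f (x + \<nu> *\<^sub>R u) - f x\<bar> * norm u"
        by (simp add: abs_mult)
      also have "\<dots> \<le> \<bar>a\<bar> * (M * (\<bar>\<nu>\<bar> * norm u)) * norm u"
        using lipM[of "x + \<nu> *\<^sub>R u" x] by (intro mult_right_mono mult_left_mono) auto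
      also have "\<dots> \<le> norm (\<bar>a\<bar> * M * \<bar>\<nu>\<bar> * norm u ^ 2)"
        by (simp add: power2_eq_square mult_ac)
      finally show "norm ((a * (f (x + \<nu> *\<^sub>R u) - f x)) *\<^sub>R u) \<le> norm (\<bar>a\<bar> * M * \<bar>\<nu>\<bar> * norm u ^ 2)" .
    qed
  qed
qed

lemma dual_norm_smoothed_gradient_bias_le:
  fixes nrm :: "'a::euclidean_space \<Rightarrow> real" and f :: "'a \<Rightarrow> real"
  assumes n: "is_norm nrm" and C: "\<And>x. nrm x \<le> C * dual_norm nrm x"
    and D: "sets D = sets borel" and \<delta>: "\<delta> > 0" and \<nu>: "\<nu> > 0"
    and E_int: "\<And>g. integrable D (\<lambda>u. (g \<bullet> u) *\<^sub>R u)"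
    and E: "\<And>g. (\<integral>u. (g \<bullet> u) *\<^sub>R u \<partial>D) = g /\<^sub>R \<delta>"
    and lip: "\<And>y z. \<bar>f y - f z\<bar> \<le> G * nrm (y - z)"
    and rem: "\<And>h. \<bar>f (x + h) - f x - g \<bullet> h\<bar> \<le> L * nrm h ^ 2 / 2"
  shows "ennreal (dual_norm nrm ((\<integral>u. ((\<delta> / \<nu>) * (f (x + \<nu> *\<^sub>R u) - f x)) *\<^sub>R u \<partial>D) - g))
    \<le> ennreal (\<delta> * \<nu> * C^2 * L / 2) * (\<integral>\<^sup>+u. ennreal (dual_norm nrm u ^ 3) \<partial>D)"
proof -
  define R where "R u = f (x + \<nu> *\<^sub>R u) - f x - \<nu> * (g \<bullet> u)" for u
  have v: "integrable D (\<lambda>u. ((\<delta> / \<nu>) * (f (x + \<nu> *\<^sub>R u) - f x)) *\<^sub>R u)"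
    by (rule integrable_difference_quotient_scaleR[OF n D E_int lip])
  have w: "integrable D (\<lambda>u. \<delta> *\<^sub>R ((g \<bullet> u) *\<^sub>R u))"
    using E_int by (rule integrable_scaleR_right)
  have w_integral: "(\<integral>u. \<delta> *\<^sub>R ((g \<bullet> u) *\<^sub>R u) \<partial>D) = g"
    using E \<delta> by (simp del: scaleR_scaleR) (simp add: scaleR_scaleR)
  have diff_eq: "(\<lambda>u. ((\<delta> / \<nu>) * R u) *\<^sub>R u)
      = (\<lambda>u. ((\<delta> / \<nu>) * (f (x + \<nu> *\<^sub>R u) - f x)) *\<^sub>R u - \<delta> *\<^sub>R ((g \<bullet> u) *\<^sub>R u))"
    using \<nu> by (simp add: fun_eq_iff R_def right_diff_distrib scaleR_diff_left)
  have "(\<integral>u. ((\<delta> / \<nu>) * (f (x + \<nu> *\<^sub>R u) - f x)) *\<^sub>R u \<partial>D) - g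
      = (\<integral>u. ((\<delta> / \<nu>) * R u) *\<^sub>R u \<partial>D)"
    by (simp only: diff_eq Bochner_Integration.integral_diff[OF v w] w_integral)
  moreover have "integrable D (\<lambda>u. ((\<delta> / \<nu>) * R u) *\<^sub>R u)"
    unfolding diff_eq using v w by (rule Bochner_Integration.integrable_diff)
  ultimately have "ennreal (dual_norm nrm ((\<integral>u. ((\<delta> / \<nu>) * (f (x + \<nu> *\<^sub>R u) - f x)) *\<^sub>R u \<partial>D) - g))
      \<le> (\<integral>\<^sup>+u. ennreal (dual_norm nrm (((\<delta> / \<nu>) * R u) *\<^sub>R u)) \<partial>D)"
    by (simp add: dual_norm_integral_le[OF n])
  also have "\<dots> \<le> (\<integral>\<^sup>+u. ennreal (\<delta> * \<nu> * C^2 * L / 2) * ennreal (dual_norm nrm u ^ 3) \<partial>D)"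
  proof (rule nn_integral_mono)
    fix u
    have "dual_norm nrm (((\<delta> / \<nu>) * R u) *\<^sub>R u) \<le> (\<delta> / \<nu>) * \<bar>R u\<bar> * dual_norm nrm u"
      using dual_norm_scaleR_le[OF n, of "(\<delta> / \<nu>) * R u" u] \<delta> \<nu> by (simp add: abs_mult)
    also have "\<dots> \<le> (\<delta> / \<nu>) * (L * C^2 * \<nu>^2 * dual_norm nrm u ^ 2 / 2) * dual_norm nrm u"
      unfolding R_def using \<delta> \<nu> dual_norm_nonneg[OF n, of u]
      by (intro mult_right_mono mult_left_mono abs_remainder_scaleR_le_dual_norm[OF n C rem]) auto
    also have "\<dots> = dual_norm nrm u ^ 3 * (\<delta> * \<nu> * C^2 * L / 2)"
      using \<nu> by (simp add: field_simps power2_eq_square power3_eq_cube)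
    finally have "ennreal (dual_norm nrm (((\<delta> / \<nu>) * R u) *\<^sub>R u))
        \<le> ennreal (dual_norm nrm u ^ 3 * (\<delta> * \<nu> * C^2 * L / 2))"
      by (rule ennreal_leI)
    also have "\<dots> = ennreal (\<delta> * \<nu> * C^2 * L / 2) * ennreal (dual_norm nrm u ^ 3)"
      using dual_norm_nonneg[OF n, of u] by (subst ennreal_mult') (simp_all add: mult.commute)
    finally show "ennreal (dual_norm nrm (((\<delta> / \<nu>) * R u) *\<^sub>R u))
        \<le> ennreal (\<delta> * \<nu> * C^2 * L / 2) * ennreal (dual_norm nrm u ^ 3)" .
  qed
  also have "\<dots> = ennreal (\<delta> * \<nu> * C^2 * L / 2) * (\<integral>\<^sup>+u. ennreal (dual_norm nrm u ^ 3) \<partial>D)"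
    using borel_measurable_dual_norm[OF n D] by (intro nn_integral_cmult) measurable
  finally show ?thesis .
qed

lemma dual_norm_zo_grad_power2_le:
  fixes nrm :: "'a::euclidean_space \<Rightarrow> real" and F :: "'a \<Rightarrow> 'b \<Rightarrow> real"
  assumes n: "is_norm nrm" and C: "\<And>x. nrm x \<le> C * dual_norm nrm x" and \<nu>: "\<nu> \<noteq> 0"
    and rem: "\<And>h. \<bar>F (x + h) \<xi> - F x \<xi> - g \<bullet> h\<bar> \<le> L * nrm h ^ 2 / 2"
  shows "dual_norm nrm (zo_grad F \<delta> \<nu> x \<xi> u) ^ 2
    \<le> C^4 * L^2 * \<delta>^2 * \<nu>^2 / 2 * dual_norm nrm u ^ 6
      + 2 * \<delta>^2 * ((g \<bullet> u)^2 * dual_norm nrm u ^ 2)"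
proof -
  define a where "a = \<delta> / \<nu>"
  define d where "d = dual_norm nrm u"
  define s where "s = g \<bullet> u"
  define R where "R = F (x + \<nu> *\<^sub>R u) \<xi> - F x \<xi> - \<nu> * s"
  define B where "B = L * C^2 * \<nu>^2 * d ^ 2 / 2"
  have \<delta>_eq: "\<delta> = a * \<nu>" using \<nu> by (simp add: a_def)
  have "\<bar>R\<bar> \<le> B" unfolding R_def B_def s_def d_def
    by (rule abs_remainder_scaleR_le_dual_norm[OF n C rem])
  then have R2: "R^2 \<le> B^2" using power_mono[of "\<bar>R\<bar>" B 2] by simp
  have zo: "zo_grad F \<delta> \<nu> x \<xi> u = (a * (R + \<nu> * s)) *\<^sub>R u"
    unfolding zo_grad_def R_def a_def by simp
  have "dual_norm nrm (zo_grad F \<delta> \<nu> x \<xi> u) \<le> \<bar>a * (R + \<nu> * s)\<bar> * d"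
    unfolding zo d_def by (rule dual_norm_scaleR_le[OF n])
  then have "dual_norm nrm (zo_grad F \<delta> \<nu> x \<xi> u) ^ 2 \<le> (\<bar>a * (R + \<nu> * s)\<bar> * d) ^ 2"
    by (rule power_mono) (rule dual_norm_nonneg[OF n])
  also have "\<dots> = a^2 * (R + \<nu> * s)^2 * d^2"
    by (simp only: power_mult_distrib power2_abs)
  also have "\<dots> \<le> a^2 * (2 * B^2 + 2 * (\<nu> * s)^2) * d^2"
  proof (intro mult_right_mono mult_left_mono)
    have "(R + \<nu> * s)^2 + (R - \<nu> * s)^2 = 2 * R^2 + 2 * (\<nu> * s)^2"
      by (simp add: power2_eq_square algebra_simps)
    then show "(R + \<nu> * s)^2 \<le> 2 * B^2 + 2 * (\<nu> * s)^2"
      using R2 zero_le_power2[of "R - \<nu> * s"] by linarith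
  qed simp_all
  also have "\<dots> = C^4 * L^2 * \<delta>^2 * \<nu>^2 / 2 * d ^ 6 + 2 * \<delta>^2 * (s^2 * d^2)"
    unfolding \<delta>_eq B_def by (simp add: power2_eq_square eval_nat_numeral algebra_simps)
  finally show ?thesis by (simp only: d_def s_def)
qed

lemma zo_grad_second_moment_le:
  fixes nrm :: "'a::euclidean_space \<Rightarrow> real" and F :: "'a \<Rightarrow> 'b \<Rightarrow> real"
  assumes n: "is_norm nrm" and C: "\<And>x. nrm x \<le> C * dual_norm nrm x" and \<nu>: "\<nu> \<noteq> 0"
    and D: "sets D = sets borel"
    and rem: "\<And>h. \<bar>F (x + h) \<xi> - F x \<xi> - g \<bullet> h\<bar> \<le> L * nrm h ^ 2 / 2"
  shows "(\<integral>\<^sup>+u. ennreal (dual_norm nrm (zo_grad F \<delta> \<nu> x \<xi> u) ^ 2) \<partial>D)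
    \<le> ennreal (C^4 * L^2 * \<delta>^2 * \<nu>^2 / 2) * (\<integral>\<^sup>+u. ennreal (dual_norm nrm u ^ 6) \<partial>D)
      + ennreal (2 * \<delta>^2) * (\<integral>\<^sup>+u. ennreal ((g \<bullet> u)^2 * dual_norm nrm u ^ 2) \<partial>D)"
proof -
  have dmeas: "dual_norm nrm \<in> borel_measurable D" by (rule borel_measurable_dual_norm[OF n D])
  have "(\<lambda>u. g \<bullet> u) \<in> borel_measurable borel"
    by (intro borel_measurable_continuous_onI continuous_intros)
  then have gmeas: "(\<lambda>u. g \<bullet> u) \<in> borel_measurable D" by (simp add: measurable_cong_sets[OF D refl])
  have "(\<integral>\<^sup>+u. ennreal (dual_norm nrm (zo_grad F \<delta> \<nu> x \<xi> u) ^ 2) \<partial>D)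
      \<le> (\<integral>\<^sup>+u. ennreal (C^4 * L^2 * \<delta>^2 * \<nu>^2 / 2) * ennreal (dual_norm nrm u ^ 6)
          + ennreal (2 * \<delta>^2) * ennreal ((g \<bullet> u)^2 * dual_norm nrm u ^ 2) \<partial>D)"
    using dual_norm_zo_grad_power2_le[where F = F and x = x and \<xi> = \<xi> and g = g, OF n C \<nu> rem]
      dual_norm_nonneg[OF n]
    by (intro nn_integral_mono) (simp add: ennreal_leI flip: ennreal_plus ennreal_mult)
  also have "\<dots> = ennreal (C^4 * L^2 * \<delta>^2 * \<nu>^2 / 2) * (\<integral>\<^sup>+u. ennreal (dual_norm nrm u ^ 6) \<partial>D)
      + ennreal (2 * \<delta>^2) * (\<integral>\<^sup>+u. ennreal ((g \<bullet> u)^2 * dual_norm nrm u ^ 2) \<partial>D)"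
    using dmeas gmeas by (simp add: nn_integral_add nn_integral_cmult)
  finally show ?thesis .
qed

theorem lemma2:
  fixes nrm :: "'a::euclidean_space \<Rightarrow> real"
    and F :: "'a \<Rightarrow> 'b \<Rightarrow> real" and gF :: "'a \<Rightarrow> 'b \<Rightarrow> 'a"
    and f :: "'a \<Rightarrow> real" and gf :: "'a \<Rightarrow> 'a"
    and \<Xi> :: "'b measure" and D :: "'a measure"
    and C G L \<delta> \<nu> :: real
  assumes norm: "is_norm nrm"
    and C_pos: "C > 0"
    and C_bound: "\<forall>x. nrm x \<le> C * dual_norm nrm x"
    \<comment> \<open>Assumption (A)\<close>
    and A_diff: "\<forall>\<xi>\<in>space \<Xi>. \<forall>x. ((\<lambda>y. F y \<xi>) has_derivative (\<lambda>h. gF x \<xi> \<bullet> h)) (at x)"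
    and A_lip: "\<forall>\<xi>\<in>space \<Xi>. \<forall>x y. \<bar>F x \<xi> - F y \<xi>\<bar> \<le> G * nrm (x - y)"
    and A_smooth: "\<forall>\<xi>\<in>space \<Xi>. \<forall>x y. dual_norm nrm (gF x \<xi> - gF y \<xi>) \<le> L * nrm (x - y)"
    \<comment> \<open>f is the expectation of F(.;xi)\<close>
    and Xi_prob: "prob_space \<Xi>"
    and F_int: "\<forall>x. integrable \<Xi> (\<lambda>\<xi>. F x \<xi>)"
    and f_def: "\<forall>x. f x = (\<integral>\<xi>. F x \<xi> \<partial>\<Xi>)"
    \<comment> \<open>Assumption (B): gf is the gradient of f and equals E[gF]\<close>
    and f_grad: "\<forall>x. (f has_derivative (\<lambda>h. gf x \<bullet> h)) (at x)"
    and gF_int: "\<forall>x. integrable \<Xi> (\<lambda>\<xi>. gF x \<xi>)"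
    and B: "\<forall>x. (\<integral>\<xi>. gF x \<xi> \<partial>\<Xi>) = gf x"
    \<comment> \<open>Assumption (E)\<close>
    and D_prob: "prob_space D"
    and D_sets: "sets D = sets borel"
    and \<delta>_pos: "\<delta> > 0"
    and E: "\<forall>g. integrable D (\<lambda>u. (g \<bullet> u) *\<^sub>R u) \<and>
                (\<integral>u. (g \<bullet> u) *\<^sub>R u \<partial>D) = g /\<^sub>R \<delta>"
    and \<nu>_pos: "\<nu> > 0"
  shows "(\<forall>x. ennreal (dual_norm nrm
              ((\<integral>u. ((\<delta> / \<nu>) * (f (x + \<nu> *\<^sub>R u) - f x)) *\<^sub>R u \<partial>D) - gf x))
            \<le> ennreal (\<delta> * \<nu> * C^2 * L / 2) * (\<integral>\<^sup>+u. ennreal (dual_norm nrm u ^ 3) \<partial>D)) \<and>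
         (\<forall>x. \<forall>\<xi>\<in>space \<Xi>.
           (\<integral>\<^sup>+u. ennreal (dual_norm nrm (zo_grad F \<delta> \<nu> x \<xi> u) ^ 2) \<partial>D)
            \<le> ennreal (C^4 * L^2 * \<delta>^2 * \<nu>^2 / 2) * (\<integral>\<^sup>+u. ennreal (dual_norm nrm u ^ 6) \<partial>D)
              + ennreal (2 * \<delta>^2) * (\<integral>\<^sup>+u. ennreal ((gF x \<xi> \<bullet> u)^2 * dual_norm nrm u ^ 2) \<partial>D))"
proof -
  interpret \<Xi>: prob_space \<Xi> by (rule Xi_prob)
  have C: "\<And>x. nrm x \<le> C * dual_norm nrm x" using C_bound by blast
  have E_int: "\<And>g. integrable D (\<lambda>u. (g \<bullet> u) *\<^sub>R u)"
    and E_eq: "\<And>g. (\<integral>u. (g \<bullet> u) *\<^sub>R u \<partial>D) = g /\<^sub>R \<delta>" using E by auto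
  have rem_F: "\<bar>F (x + h) \<xi> - F x \<xi> - gF x \<xi> \<bullet> h\<bar> \<le> L * nrm h ^ 2 / 2"
    if "\<xi> \<in> space \<Xi>" for x h \<xi>
    using A_diff A_smooth that by (intro abs_first_order_remainder_le[OF norm]) auto
  have rem_f: "\<bar>f (x + h) - f x - gf x \<bullet> h\<bar> \<le> L * nrm h ^ 2 / 2" for x h
  proof -
    have "f (x + h) - f x - gf x \<bullet> h = (\<integral>\<xi>. F (x + h) \<xi> - F x \<xi> - gF x \<xi> \<bullet> h \<partial>\<Xi>)"
      using F_int gF_int by (simp add: f_def flip: B)
    also have "\<bar>\<dots>\<bar> \<le> L * nrm h ^ 2 / 2"
      using F_int gF_int rem_F by (intro \<Xi>.abs_integral_le_const) auto
    finally show ?thesis .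
  qed
  have lip_f: "\<bar>f y - f z\<bar> \<le> G * nrm (y - z)" for y z
  proof -
    have "f y - f z = (\<integral>\<xi>. F y \<xi> - F z \<xi> \<partial>\<Xi>)" using F_int by (simp add: f_def)
    also have "\<bar>\<dots>\<bar> \<le> G * nrm (y - z)" using F_int A_lip by (intro \<Xi>.abs_integral_le_const) auto
    finally show ?thesis .
  qed
  show ?thesis
    by (intro conjI allI ballI zo_grad_second_moment_le[OF norm C _ D_sets]
        dual_norm_smoothed_gradient_bias_le[OF norm C D_sets \<delta>_pos \<nu>_pos E_int E_eq lip_f rem_f])
      (use \<nu>_pos rem_F in auto)
qed

end
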